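(* Let $G$ be a graph of order $n$ with stability number $\alpha$ (so $1\le\alpha\le n$). Then \[ F(G) \le f_{\mathsf T}(n,\alpha), \] with equality if and only if $G \simeq T_{n,\alpha}$.
   Context: All graphs are finite, simple and undirected; the stability number $\alpha(G)$ is the maximum size of a stable set. The Fibonacci index $F(G)$ of $G$ is the number of stable sets of $G$, including the empty set. For integers $1\le \alpha\le n$, the Turán graph $T_{n,\alpha}$ is the disjoint union of $\alpha$ cliques whose orders sum to $n$ and differ pairwise by at most one. Define $f_{\mathsf T}(n,\alpha)=F(T_{n,\alpha})=(\lceil n/\alpha\rceil+1)^p(\lfloor n/\alpha\rfloor+1)^{\alpha-p}$ with $p = n \bmod \alpha$. *)

theory Defs
  imports Complex_Main
begin

definition simple_graph :: "'a set \<Rightarrow> ('a \<Rightarrow> 'a \<Rightarrow> bool) \<Rightarrow> bool" where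
  "simple_graph V E \<longleftrightarrow> finite V \<and> (\<forall>x y. E x y \<longrightarrow> x \<in> V \<and> y \<in> V)
     \<and> (\<forall>x y. E x y \<longrightarrow> E y x) \<and> (\<forall>x. \<not> E x x)"

definition stable_set :: "'a set \<Rightarrow> ('a \<Rightarrow> 'a \<Rightarrow> bool) \<Rightarrow> 'a set \<Rightarrow> bool" where
  "stable_set V E S \<longleftrightarrow> S \<subseteq> V \<and> (\<forall>x\<in>S. \<forall>y\<in>S. \<not> E x y)"

definition stability_number :: "'a set \<Rightarrow> ('a \<Rightarrow> 'a \<Rightarrow> bool) \<Rightarrow> nat" where
  "stability_number V E = Max (card ` {S. stable_set V E S})"

definition fibonacci_index :: "'a set \<Rightarrow> ('a \<Rightarrow> 'a \<Rightarrow> bool) \<Rightarrow> nat" where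
  "fibonacci_index V E = card {S. stable_set V E S}"

definition graph_iso :: "'a set \<Rightarrow> ('a \<Rightarrow> 'a \<Rightarrow> bool) \<Rightarrow> 'b set \<Rightarrow> ('b \<Rightarrow> 'b \<Rightarrow> bool) \<Rightarrow> bool" where
  "graph_iso V E W E' \<longleftrightarrow> (\<exists>f. bij_betw f V W \<and> (\<forall>x\<in>V. \<forall>y\<in>V. E x y \<longleftrightarrow> E' (f x) (f y)))"

text \<open>This is the disjoint union of alpha cliques
  (the residue classes) whose orders differ pairwise by at most one.\<close>
definition turan_vertices :: "nat \<Rightarrow> nat set" where
  "turan_vertices n = {0..<n}"

definition turan_edge :: "nat \<Rightarrow> nat \<Rightarrow> nat \<Rightarrow> nat \<Rightarrow> bool" where
  "turan_edge n \<alpha> i j \<longleftrightarrow> i < n \<and> j < n \<and> i \<noteq> j \<and> i mod \<alpha> = j mod \<alpha>"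

definition f_T :: "nat \<Rightarrow> nat \<Rightarrow> nat" where
  "f_T n \<alpha> = (nat \<lceil>real n / real \<alpha>\<rceil> + 1) ^ (n mod \<alpha>) * (n div \<alpha> + 1) ^ (\<alpha> - n mod \<alpha>)"

end

theory Submission
  imports Defs
begin

text \<open>
  The proof is by induction on \<open>n\<close> through the recursion \<open>F(G) = F(G - v) + F(G - N[v])\<close>
  applied to a vertex \<open>v\<close> of maximum degree. A greedy argument shows
  \<open>deg v \<ge> (n - 1) div \<alpha>\<close>, and \<open>\<alpha>(G - N[v]) < \<alpha>\<close>; together with the matching recurrence
  for \<open>f_T\<close> and its monotonicity this gives the bound. For equality, every step must be
  tight, so \<open>G - v\<close> is extremal and \<open>deg v = (n - 1) div \<alpha>\<close>; inductively \<open>G - v\<close> is a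
  balanced disjoint union of \<open>\<alpha>\<close> cliques, and \<open>N(v)\<close> must be one of them.
\<close>

text \<open>Writing \<open>n = q * b + p\<close> with \<open>p < b\<close>, the Turan count is
  \<open>(q + 2)^p * (q + 1)^(b - p)\<close>: the graph has \<open>p\<close> cliques of order \<open>q + 1\<close> and
  \<open>b - p\<close> cliques of order \<open>q\<close>.\<close>

lemma f_T_closed_form:
  assumes "p < b"
  shows "f_T (q * b + p) b = (q + 2) ^ p * (q + 1) ^ (b - p)"
proof -
  have b: "real b > 0" using assms by simp
  have quot: "real (q * b + p) / real b = real q + real p / real b"
    using b by (simp add: field_simps)
  have "nat \<lceil>real (q * b + p) / real b\<rceil> + 1 = (if p = 0 then q + 1 else q + 2)"
  proof (cases "p = 0")
    case False
    have "real p / real b < 1" "0 < real p / real b" using assms False by auto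
    then have "\<lceil>real (q * b + p) / real b\<rceil> = int q + 1"
      unfolding quot by (intro ceiling_unique) auto
    then show ?thesis using False by (simp add: nat_add_distrib)
  qed (use b in simp)
  moreover have "(q * b + p) div b = q" "(q * b + p) mod b = p" using assms by auto
  ultimately show ?thesis by (simp add: f_T_def)
qed

lemma f_T_pos: "0 < f_T n b"
  by (simp add: f_T_def)

lemma f_T_empty: "f_T 0 b = 1"
  by (simp add: f_T_def)

text \<open>The recurrence satisfied by the Turan count, mirroring the vertex-deletion identity
  \<open>F(G) = F(G - v) + F(G - N[v])\<close> for a vertex \<open>v\<close> in a largest clique of
  \<open>T(m + 1, b)\<close>: removing its closed neighbourhood deletes \<open>m div b\<close> further vertices and
  one clique.\<close>

lemma f_T_recurrence:
  assumes "1 \<le> b"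
  shows "f_T (Suc m) b = f_T m b + f_T (m - m div b) (b - 1)"
proof -
  define k r where "k = m div b" and "r = m mod b"
  have m: "m = k * b + r" and rb: "r < b" using assms by (simp_all add: k_def r_def)
  have "k \<le> k * b" using assms by simp
  then have mk: "m - m div b = k * (b - 1) + r"
    unfolding k_def[symmetric] using m by (simp add: diff_mult_distrib2)
  show ?thesis
  proof (cases "Suc r < b")
    case True
    define A where "A = (k + 2) ^ r * (k + 1) ^ (b - Suc r)"
    have "f_T (Suc m) b = (k + 2) ^ Suc r * (k + 1) ^ (b - Suc r)"
      using f_T_closed_form[OF True, of k] m by simp
    then have "f_T (Suc m) b = A * (k + 2)" unfolding A_def by (simp only: power_Suc mult_ac)
    moreover have "f_T m b = (k + 2) ^ r * (k + 1) ^ Suc (b - Suc r)"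
      using f_T_closed_form[OF rb, of k] m True by (simp add: Suc_diff_Suc)
    then have "f_T m b = A * (k + 1)" unfolding A_def by (simp only: power_Suc mult_ac)
    moreover have "f_T (m - m div b) (b - 1) = A"
      using f_T_closed_form[of r "b - 1" k] mk True by (simp add: A_def)
    ultimately show ?thesis by simp
  next
    case False
    then have r: "Suc r = b" using rb by simp
    have "Suc m = Suc k * b + 0" using m r by simp
    then have "f_T (Suc m) b = (k + 2) ^ Suc r"
      using f_T_closed_form[of 0 b "Suc k"] r by simp
    then have "f_T (Suc m) b = (k + 2) ^ r * (k + 2)" by (simp only: power_Suc mult_ac)
    moreover have "b - r = 1" using r by simp
    then have "f_T m b = (k + 2) ^ r * (k + 1)"
      using f_T_closed_form[OF rb, of k] m by simp
    moreover have "f_T (m - m div b) (b - 1) = (k + 2) ^ r"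
    proof (cases "r = 0")
      case True then show ?thesis using mk r by (simp add: f_T_empty)
    next
      case False
      then have "m - m div b = Suc k * (b - 1) + 0" using mk r by simp
      then show ?thesis using f_T_closed_form[of 0 "b - 1" "Suc k"] r False by simp
    qed
    ultimately show ?thesis by simp
  qed
qed

text \<open>For \<open>b \<ge> 1\<close> the Turan count is strictly increasing in the number of vertices
  (each step of the recurrence adds a positive term).\<close>

lemma f_T_strict_mono:
  assumes "1 \<le> b" "m < m'"
  shows "f_T m b < f_T m' b"
proof -
  have "f_T n b < f_T (Suc n) b" for n
    using f_T_recurrence[OF assms(1), of n] f_T_pos[of _ "b - 1"] by simp
  then show ?thesis using lift_Suc_mono_less[of "\<lambda>n. f_T n b"] assms(2) by blast
qed

lemma f_T_mono: "m \<le> m' \<Longrightarrow> f_T m b \<le> f_T m' b"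
  using f_T_strict_mono[of b m m'] by (cases "b = 0 \<or> m = m'") (auto simp: f_T_def)

text \<open>The arithmetic core of the induction: deleting a vertex of degree at least
  \<open>m div b\<close> cannot beat the recurrence.\<close>

lemma f_T_deletion_bound:
  assumes "1 \<le> b" "m div b \<le> d"
  shows "f_T m b + f_T (m - d) (b - 1) \<le> f_T (Suc m) b"
  using f_T_recurrence[OF assms(1), of m] f_T_mono[of "m - d" "m - m div b" "b - 1"] assms(2)
  by simp

text \<open>The graph axioms that survive passing to induced subgraphs \<open>(V', E)\<close>, \<open>V' \<subseteq> V\<close>;
  all lemmas below work with a fixed relation \<open>E\<close> and varying vertex sets.\<close>

definition undirected :: "('a \<Rightarrow> 'a \<Rightarrow> bool) \<Rightarrow> bool" where
  "undirected E \<longleftrightarrow> (\<forall>x y. E x y \<longrightarrow> E y x) \<and> (\<forall>x. \<not> E x x)"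

definition nbhd :: "'a set \<Rightarrow> ('a \<Rightarrow> 'a \<Rightarrow> bool) \<Rightarrow> 'a \<Rightarrow> 'a set" where
  "nbhd V E v = {y \<in> V. E v y}"

definition degree :: "'a set \<Rightarrow> ('a \<Rightarrow> 'a \<Rightarrow> bool) \<Rightarrow> 'a \<Rightarrow> nat" where
  "degree V E v = card (nbhd V E v)"

lemma finite_stable_sets: "finite V \<Longrightarrow> finite {S. stable_set V E S}"
  by (rule finite_subset[of _ "Pow V"]) (auto simp: stable_set_def)

lemma stable_set_empty: "stable_set V E {}"
  by (simp add: stable_set_def)

lemma card_stable_le_stability:
  "finite V \<Longrightarrow> stable_set V E S \<Longrightarrow> card S \<le> stability_number V E"
  unfolding stability_number_def by (rule Max_ge) (auto intro: finite_stable_sets)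

lemma maximum_stable_set:
  assumes "finite V"
  obtains S where "stable_set V E S" "card S = stability_number V E"
proof -
  have "stability_number V E \<in> card ` {S. stable_set V E S}"
    unfolding stability_number_def using assms
    by (intro Max_in) (auto intro: finite_stable_sets stable_set_empty)
  then show ?thesis using that by auto
qed

lemma stability_number_mono:
  assumes "finite V" "V' \<subseteq> V"
  shows "stability_number V' E \<le> stability_number V E"
proof -
  obtain S where S: "stable_set V' E S" "card S = stability_number V' E"
    using maximum_stable_set[of V' E] assms finite_subset by blast
  then have "stable_set V E S" using assms(2) by (auto simp: stable_set_def)
  then show ?thesis using card_stable_le_stability[OF assms(1)] S(2) by metis
qed

lemma stability_number_zero:
  assumes "finite V" "undirected E" "stability_number V E = 0"
  shows "V = {}"
proof (rule ccontr)
  assume "V \<noteq> {}"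
  then obtain v where "v \<in> V" by auto
  then have "stable_set V E {v}" using assms(2) by (simp add: stable_set_def undirected_def)
  then show False using card_stable_le_stability[OF assms(1), of E "{v}"] assms(3) by simp
qed

text \<open>A maximum stable set of \<open>G - N[v]\<close> extends by \<open>v\<close>, so
  \<open>\<alpha>(G - N[v]) < \<alpha>(G)\<close>.\<close>

lemma stability_delete_closed_nbhd:
  assumes "finite V" "undirected E" "v \<in> V"
  shows "stability_number (V - insert v (nbhd V E v)) E < stability_number V E"
proof -
  let ?U = "V - insert v (nbhd V E v)"
  obtain S where S: "stable_set ?U E S" "card S = stability_number ?U E"
    using maximum_stable_set[of ?U E] assms(1) by auto
  have "stable_set V E (insert v S)"
    using S(1) assms(2,3) unfolding stable_set_def undirected_def nbhd_def by auto
  moreover have "v \<notin> S" "finite S"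
    using S(1) assms(1) unfolding stable_set_def by (auto intro: finite_subset)
  ultimately show ?thesis
    using card_stable_le_stability[OF assms(1), of E "insert v S"] S(2) by simp
qed

lemma card_delete_closed_nbhd:
  assumes "finite V" "undirected E" "v \<in> V"
  shows "card (V - insert v (nbhd V E v)) = card V - 1 - degree V E v"
proof -
  have sub: "insert v (nbhd V E v) \<subseteq> V" using assms(3) by (auto simp: nbhd_def)
  have "v \<notin> nbhd V E v" using assms(2) by (simp add: nbhd_def undirected_def)
  then have "card (insert v (nbhd V E v)) = degree V E v + 1"
    using assms(1) by (simp add: degree_def nbhd_def)
  then show ?thesis using card_Diff_subset[OF finite_subset[OF sub assms(1)] sub] by simp
qed

text \<open>The fundamental recursion \<open>F(G) = F(G - v) + F(G - N[v])\<close>: split the stable sets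
  according to whether they contain \<open>v\<close>.\<close>

lemma fib_delete_vertex:
  assumes "finite V" "undirected E" "v \<in> V"
  shows "fibonacci_index V E
    = fibonacci_index (V - {v}) E + fibonacci_index (V - insert v (nbhd V E v)) E"
proof -
  let ?U = "V - insert v (nbhd V E v)"
  have split: "{S. stable_set V E S}
    = {S. stable_set (V - {v}) E S} \<union> insert v ` {S. stable_set ?U E S}"
  proof (intro equalityI subsetI)
    fix S assume "S \<in> {S. stable_set V E S}"
    then have S: "stable_set V E S" by simp
    show "S \<in> {S. stable_set (V - {v}) E S} \<union> insert v ` {S. stable_set ?U E S}"
    proof (cases "v \<in> S")
      case True
      then have "stable_set ?U E (S - {v})" "S = insert v (S - {v})"
        using S assms(2) unfolding stable_set_def undirected_def nbhd_def by auto
      then show ?thesis by blast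
    qed (use S in \<open>auto simp: stable_set_def\<close>)
  qed (use assms(2,3) in \<open>auto simp: stable_set_def undirected_def nbhd_def\<close>)
  have "inj_on (insert v) {S. stable_set ?U E S}"
    by (rule inj_onI) (auto simp: stable_set_def)
  moreover have "{S. stable_set (V - {v}) E S} \<inter> insert v ` {S. stable_set ?U E S} = {}"
    by (auto simp: stable_set_def)
  ultimately show ?thesis
    unfolding fibonacci_index_def split using assms(1)
    by (simp add: card_Un_disjoint card_image finite_stable_sets)
qed

text \<open>Greedy bound: if all degrees are at most \<open>D\<close>, then repeatedly picking a vertex and
  discarding its closed neighbourhood yields \<open>n \<le> (D + 1) \<alpha>\<close>.\<close>

lemma greedy_stable_bound:
  assumes "finite V" "undirected E" "\<forall>x\<in>V. degree V E x \<le> D"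
  shows "card V \<le> (D + 1) * stability_number V E"
  using assms
proof (induction "card V" arbitrary: V rule: less_induct)
  case less
  show ?case
  proof (cases "V = {}")
    case False
    then obtain v where v: "v \<in> V" by auto
    let ?U = "V - insert v (nbhd V E v)"
    have "card ?U < card V" using less(2) v by (intro psubset_card_mono) auto
    moreover have "\<forall>x\<in>?U. degree ?U E x \<le> D"
    proof
      fix x assume x: "x \<in> ?U"
      have "degree ?U E x \<le> degree V E x"
        unfolding degree_def using less(2) by (intro card_mono) (auto simp: nbhd_def)
      then show "degree ?U E x \<le> D" using less(4) x by force
    qed
    ultimately have IH: "card ?U \<le> (D + 1) * stability_number ?U E"
      using less by auto
    have fin_nbhd: "finite (nbhd V E v)" using less(2) by (simp add: nbhd_def)
    have "card V \<le> card (?U \<union> insert v (nbhd V E v))"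
      using less(2) fin_nbhd by (intro card_mono) auto
    also have "\<dots> \<le> card ?U + card (insert v (nbhd V E v))" by (rule card_Un_le)
    also have "card (insert v (nbhd V E v)) \<le> degree V E v + 1"
      using fin_nbhd by (simp add: card_insert_if degree_def)
    also have "degree V E v \<le> D" using less(4) v by blast
    finally have "card V \<le> card ?U + (D + 1)" by simp
    also have "\<dots> \<le> (D + 1) * (stability_number ?U E + 1)" using IH by simp
    also have "\<dots> \<le> (D + 1) * stability_number V E"
      using stability_delete_closed_nbhd[OF less(2,3) v] by (intro mult_le_mono2) simp
    finally show ?thesis .
  qed simp
qed

lemma max_degree_lower_bound:
  assumes "finite V" "undirected E" "stability_number V E \<le> b" "1 \<le> b"
    and "v \<in> V" "\<forall>x\<in>V. degree V E x \<le> degree V E v"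
  shows "(card V - 1) div b \<le> degree V E v"
proof -
  have "card V \<le> (degree V E v + 1) * stability_number V E"
    using greedy_stable_bound[OF assms(1,2,6)] .
  also have "\<dots> \<le> (degree V E v + 1) * b" using assms(3) by (intro mult_le_mono2)
  moreover have "card V > 0" using assms(1,5) card_gt_0_iff by blast
  ultimately have "card V - 1 < (degree V E v + 1) * b" by linarith
  then have "(card V - 1) div b < degree V E v + 1" by (rule less_mult_imp_div_less)
  then show ?thesis by simp
qed

lemma exists_max_degree:
  assumes "finite V" "V \<noteq> {}"
  obtains v where "v \<in> V" "\<forall>x\<in>V. degree V E x \<le> degree V E v"
proof -
  have "Max (degree V E ` V) \<in> degree V E ` V" using assms by (intro Max_in) auto
  then obtain v where "v \<in> V" "degree V E v = Max (degree V E ` V)" by auto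
  then show ?thesis using that assms(1) by simp
qed

text \<open>The upper bound, in the form needed for induction (any \<open>b \<ge> \<alpha>\<close>): delete a vertex
  \<open>v\<close> of maximum degree and bound both terms of the recursion by induction;
  \<open>f_T_deletion_bound\<close> closes the step.\<close>

theorem fib_upper_bound:
  assumes "finite V" "undirected E" "stability_number V E \<le> b"
  shows "fibonacci_index V E \<le> f_T (card V) b"
  using assms
proof (induction "card V" arbitrary: V b rule: less_induct)
  case less
  note fin = less(2) and und = less(3) and stab = less(4)
  show ?case
  proof (cases "V = {}")
    case True
    have "{S. stable_set {} E S} = {{}}" by (auto simp: stable_set_def)
    then show ?thesis using True by (simp add: fibonacci_index_def f_T_empty)
  next
    case False
    then have b: "1 \<le> b" using stability_number_zero[OF fin und] stab by fastforce
    obtain v where v: "v \<in> V" and vmax: "\<forall>x\<in>V. degree V E x \<le> degree V E v"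
      using exists_max_degree[OF fin False] by blast
    define m d where "m = card V - 1" and "d = degree V E v"
    let ?W = "V - {v}" and ?U = "V - insert v (nbhd V E v)"
    have n: "card V = Suc m" using fin v card_gt_0_iff[of V] by (auto simp: m_def)
    have "fibonacci_index ?W E \<le> f_T m b"
    proof -
      have "card ?W < card V" "card ?W = m" using fin v n by auto
      moreover have "stability_number ?W E \<le> b"
        using stability_number_mono[OF fin, of ?W E] stab by simp
      ultimately show ?thesis using less(1)[of ?W b] fin und by simp
    qed
    moreover have "fibonacci_index ?U E \<le> f_T (m - d) (b - 1)"
    proof -
      have "card ?U < card V" using fin v by (intro psubset_card_mono) auto
      moreover have "stability_number ?U E \<le> b - 1"
        using stability_delete_closed_nbhd[OF fin und v] stab by linarith
      moreover have "card ?U = m - d"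
        using card_delete_closed_nbhd[OF fin und v] by (simp add: m_def d_def)
      ultimately show ?thesis using less(1)[of ?U "b - 1"] fin und by simp
    qed
    moreover have "m div b \<le> d"
      using max_degree_lower_bound[OF fin und stab b v vmax] by (simp add: m_def d_def)
    ultimately have "fibonacci_index V E \<le> f_T m b + f_T (m - d) (b - 1)"
      using fib_delete_vertex[OF fin und v] by simp
    also have "\<dots> \<le> f_T (card V) b"
      using f_T_deletion_bound[OF b \<open>m div b \<le> d\<close>] n by simp
    finally show ?thesis .
  qed
qed

text \<open>If the bound is attained, both inequalities in the inductive step are equalities:
  \<open>G - v\<close> is again extremal, and \<open>v\<close> has degree exactly \<open>(n - 1) div b\<close>
  (by strict monotonicity of \<open>f_T\<close> when \<open>b \<ge> 2\<close>; for \<open>b = 1\<close> because \<open>G - N[v]\<close> is empty).\<close>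

lemma tight_deletion:
  assumes fin: "finite V" and und: "undirected E" and stab: "stability_number V E \<le> b"
    and b: "1 \<le> b" and v: "v \<in> V" and vmax: "\<forall>x\<in>V. degree V E x \<le> degree V E v"
    and tight: "fibonacci_index V E = f_T (card V) b"
  shows "fibonacci_index (V - {v}) E = f_T (card V - 1) b"
    and "degree V E v = (card V - 1) div b"
proof -
  define m d k where "m = card V - 1" and "d = degree V E v" and "k = (card V - 1) div b"
  let ?W = "V - {v}" and ?U = "V - insert v (nbhd V E v)"
  have n: "card V = Suc m" using fin v card_gt_0_iff[of V] by (auto simp: m_def)
  have stab_U: "stability_number ?U E \<le> b - 1"
    using stability_delete_closed_nbhd[OF fin und v] stab by linarith
  have card_U: "card ?U = m - d"
    using card_delete_closed_nbhd[OF fin und v] by (simp add: m_def d_def)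
  have FW: "fibonacci_index ?W E \<le> f_T m b"
    using fib_upper_bound[of ?W E b] fin und stab stability_number_mono[OF fin, of ?W E] n v
    by simp
  have FU: "fibonacci_index ?U E \<le> f_T (m - d) (b - 1)"
    using fib_upper_bound[OF _ und stab_U] fin card_U by simp
  have kd: "k \<le> d"
    using max_degree_lower_bound[OF fin und stab b v vmax] by (simp add: k_def d_def)
  have "d \<le> m"
    using fin und v card_mono[of ?W "nbhd V E v"] n
    by (auto simp: d_def degree_def nbhd_def undirected_def)
  have mono: "f_T (m - d) (b - 1) \<le> f_T (m - k) (b - 1)" using kd by (intro f_T_mono) simp
  have "f_T (Suc m) b = fibonacci_index ?W E + fibonacci_index ?U E"
    using fib_delete_vertex[OF fin und v] tight n by simp
  moreover have "f_T (Suc m) b = f_T m b + f_T (m - k) (b - 1)"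
    using f_T_recurrence[OF b, of m] by (simp add: k_def m_def)
  ultimately have FW_eq: "fibonacci_index ?W E = f_T m b"
    and FU_eq: "f_T (m - d) (b - 1) = f_T (m - k) (b - 1)"
    using FW FU mono by linarith+
  show "fibonacci_index ?W E = f_T (card V - 1) b" using FW_eq by (simp add: m_def)
  have "d = k"
  proof (cases "b = 1")
    case True
    then have "?U = {}" using stability_number_zero[OF _ und, of ?U] stab_U fin by simp
    then have "m - d = 0" using card_U by (metis card.empty)
    then show ?thesis using \<open>d \<le> m\<close> True by (simp add: k_def m_def)
  next
    case False
    show ?thesis
    proof (rule ccontr)
      assume "d \<noteq> k"
      then have "f_T (m - d) (b - 1) < f_T (m - k) (b - 1)"
        using False b kd \<open>d \<le> m\<close> by (intro f_T_strict_mono) auto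
      then show False using FU_eq by simp
    qed
  qed
  then show "degree V E v = (card V - 1) div b" by (simp add: d_def k_def)
qed

text \<open>A labelling \<open>c\<close> of the vertices by \<open>{..<b}\<close> exhibits \<open>(V, E)\<close> as the disjoint
  union of the cliques \<open>{x. c x = r}\<close>; it is balanced when these cliques have sizes
  \<open>n div b\<close> or \<open>n div b + 1\<close>. Balanced labelled graphs are exactly the copies of
  \<open>T(n, b)\<close> (see \<open>iso_turan_iff_balanced\<close>).\<close>

definition clique_labelling :: "'a set \<Rightarrow> ('a \<Rightarrow> 'a \<Rightarrow> bool) \<Rightarrow> nat \<Rightarrow> ('a \<Rightarrow> nat) \<Rightarrow> bool" where
  "clique_labelling V E b c \<longleftrightarrow>
     (\<forall>x\<in>V. c x < b) \<and> (\<forall>x\<in>V. \<forall>y\<in>V. E x y \<longleftrightarrow> x \<noteq> y \<and> c x = c y)"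

definition class_size :: "'a set \<Rightarrow> ('a \<Rightarrow> nat) \<Rightarrow> nat \<Rightarrow> nat" where
  "class_size V c r = card {x \<in> V. c x = r}"

definition balanced :: "'a set \<Rightarrow> nat \<Rightarrow> ('a \<Rightarrow> nat) \<Rightarrow> bool" where
  "balanced V b c \<longleftrightarrow>
     (\<forall>r<b. class_size V c r = card V div b \<or> class_size V c r = card V div b + 1)"

lemma clique_labelling_subset:
  "clique_labelling V E b c \<Longrightarrow> V' \<subseteq> V \<Longrightarrow> clique_labelling V' E b c"
  unfolding clique_labelling_def by blast

lemma sum_class_sizes:
  assumes "finite V" "\<forall>x\<in>V. c x < b"
  shows "(\<Sum>r<b. class_size V c r) = card V"
proof -
  have "V = (\<Union>r<b. {x \<in> V. c x = r})" using assms(2) by auto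
  moreover have "card (\<Union>r<b. {x \<in> V. c x = r}) = (\<Sum>r<b. card {x \<in> V. c x = r})"
    using assms(1) by (intro card_UN_disjoint) auto
  ultimately show ?thesis by (simp add: class_size_def)
qed

lemma near_equal_parts:
  fixes f :: "nat \<Rightarrow> nat"
  assumes b: "1 \<le> b" and near: "\<forall>r<b. f r = k \<or> f r = k + 1" and sum: "(\<Sum>r<b. f r) = n"
  shows "\<forall>r<b. f r = n div b \<or> f r = n div b + 1"
proof (cases "\<forall>r<b. f r = k + 1")
  case True
  then have "n = b * (k + 1)" using sum by simp
  then show ?thesis using True b by simp
next
  case False
  have "(\<Sum>r<b. f r) < (\<Sum>r<b. k + 1)"
    using False near by (intro sum_strict_mono_ex1) force+
  moreover have "(\<Sum>r<b. k) \<le> (\<Sum>r<b. f r)" using near by (intro sum_mono) force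
  ultimately have "n div b = k" using sum b by (intro div_nat_eqI) simp_all
  then show ?thesis using near by simp
qed

lemma large_classes:
  assumes "finite V" "1 \<le> b" "\<forall>x\<in>V. c x < b" "balanced V b c"
  defines "L \<equiv> {r \<in> {..<b}. class_size V c r = card V div b + 1}"
  shows "\<forall>r<b. class_size V c r = card V div b + (if r \<in> L then 1 else 0)"
    and "card L = card V mod b"
proof -
  show sizes: "\<forall>r<b. class_size V c r = card V div b + (if r \<in> L then 1 else 0)"
    using assms(4) by (auto simp: balanced_def L_def)
  have "card V = (\<Sum>r<b. card V div b + (if r \<in> L then 1 else 0))"
    using sum_class_sizes[OF assms(1,3)] sizes by simp
  also have "\<dots> = b * (card V div b) + card L"
    by (simp add: sum.distrib sum.If_cases L_def Int_def)
  finally show "card L = card V mod b" by (metis add_left_imp_eq div_mult_mod_eq mult.commute)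
qed

text \<open>A stable set of a disjoint union of cliques picks at most one vertex from each clique,
  so \<open>F = \<Prod>(size + 1)\<close>; proved by induction via the deletion recursion.\<close>

lemma fib_clique_labelling:
  assumes "finite V" "undirected E" "clique_labelling V E b c"
  shows "fibonacci_index V E = (\<Prod>r<b. class_size V c r + 1)"
  using assms
proof (induction "card V" arbitrary: V rule: less_induct)
  case less
  note fin = less(2) and und = less(3) and lab = less(4)
  show ?case
  proof (cases "V = {}")
    case True
    have "{S. stable_set {} E S} = {{}}" by (auto simp: stable_set_def)
    then show ?thesis using True by (simp add: fibonacci_index_def class_size_def)
  next
    case False
    then obtain v where v: "v \<in> V" by auto
    let ?W = "V - {v}" and ?U = "V - insert v (nbhd V E v)"
    have cv: "c v \<in> {..<b}" using lab v by (simp add: clique_labelling_def)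
    have U_eq: "?U = {x \<in> V. c x \<noteq> c v}" using lab v
      unfolding clique_labelling_def nbhd_def by auto
    have IH: "fibonacci_index V' E = (\<Prod>r<b. class_size V' c r + 1)" if "V' \<subset> V" for V'
      using less(1)[of V'] psubset_card_mono[OF fin that] fin that und
        clique_labelling_subset[OF lab, of V'] by (auto intro: finite_subset)
    define X where "X = (\<Prod>r\<in>{..<b} - {c v}. class_size V c r + 1)"
    have size_W: "class_size ?W c r = (if r = c v then class_size V c r - 1 else class_size V c r)"
      for r
    proof -
      have "{x \<in> ?W. c x = r} = {x \<in> V. c x = r} - {v}" by auto
      then show ?thesis using fin v by (auto simp: class_size_def)
    qed
    have size_U: "class_size ?U c r = (if r = c v then 0 else class_size V c r)" for r
      unfolding U_eq class_size_def by (cases "r = c v") (auto intro: arg_cong[where f = card])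
    have "class_size V c (c v) \<noteq> 0"
      using fin v by (auto simp: class_size_def card_eq_0_iff)
    then have prod_W: "(\<Prod>r<b. class_size ?W c r + 1) = class_size V c (c v) * X"
      unfolding prod.remove[OF finite_lessThan cv] X_def using size_W
      by (auto intro!: prod.cong)
    have prod_U: "(\<Prod>r<b. class_size ?U c r + 1) = X"
      unfolding prod.remove[OF finite_lessThan cv] X_def using size_U
      by (auto intro!: prod.cong)
    have "fibonacci_index V E = fibonacci_index ?W E + fibonacci_index ?U E"
      using fib_delete_vertex[OF fin und v] .
    also have "\<dots> = class_size V c (c v) * X + X"
    proof -
      have "?W \<subset> V" "?U \<subset> V" using v by auto
      then show ?thesis using IH[of ?W] IH[of ?U] prod_W prod_U by simp
    qed
    also have "\<dots> = (\<Prod>r<b. class_size V c r + 1)"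
      unfolding prod.remove[OF finite_lessThan cv] X_def by simp
    finally show ?thesis .
  qed
qed

lemma fib_balanced:
  assumes "finite V" "undirected E" "1 \<le> b" "clique_labelling V E b c" "balanced V b c"
  shows "fibonacci_index V E = f_T (card V) b"
proof -
  define q p L where "q = card V div b" and "p = card V mod b"
    and "L = {r \<in> {..<b}. class_size V c r = card V div b + 1}"
  have c: "\<forall>x\<in>V. c x < b" using assms(4) by (simp add: clique_labelling_def)
  note sizes = large_classes(1)[OF assms(1,3) c assms(5)]
  have "fibonacci_index V E = (\<Prod>r<b. class_size V c r + 1)"
    using fib_clique_labelling[OF assms(1,2,4)] .
  also have "\<dots> = (\<Prod>r<b. if r \<in> L then q + 2 else q + 1)"
    using sizes by (intro prod.cong) (auto simp: q_def L_def)
  also have "\<dots> = (q + 2) ^ card L * (q + 1) ^ (b - card L)"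
  proof -
    have L: "L \<subseteq> {..<b}" by (auto simp: L_def)
    then have "{..<b} \<inter> L = L" "{..<b} \<inter> - L = {..<b} - L" by auto
    then show ?thesis
      using L by (simp add: prod.If_cases card_Diff_subset finite_subset)
  qed
  also have "card L = p"
    using large_classes(2)[OF assms(1,3) c assms(5)] by (simp add: L_def p_def)
  also have "(q + 2) ^ p * (q + 1) ^ (b - p) = f_T (q * b + p) b"
    using f_T_closed_form[of p b q] assms(3) by (simp add: p_def)
  also have "q * b + p = card V" by (simp add: q_def p_def)
  finally show ?thesis .
qed

text \<open>If \<open>G - v\<close> is a union of \<open>b\<close> cliques and \<open>\<alpha>(G - N[v]) < b\<close>, then some clique
  of \<open>G - v\<close> lies inside \<open>N(v)\<close>: otherwise one vertex outside \<open>N(v)\<close> from each clique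
  would form a stable set of size \<open>b\<close> in \<open>G - N[v]\<close>.\<close>

lemma class_inside_nbhd:
  assumes fin: "finite V" and stab: "stability_number (V - insert v (nbhd V E v)) E < b"
    and lab: "clique_labelling (V - {v}) E b c"
  shows "\<exists>r<b. {x \<in> V - {v}. c x = r} \<subseteq> nbhd V E v"
proof (rule ccontr)
  let ?U = "V - insert v (nbhd V E v)"
  assume "\<not> ?thesis"
  then have "\<forall>r<b. \<exists>x. x \<in> V - {v} \<and> c x = r \<and> x \<notin> nbhd V E v" by blast
  then obtain pick where pick: "\<And>r. r < b \<Longrightarrow>
      pick r \<in> V - {v} \<and> c (pick r) = r \<and> pick r \<notin> nbhd V E v"
    by metis
  have "inj_on pick {..<b}" using pick by (metis inj_onI lessThan_iff)
  then have "card (pick ` {..<b}) = b" by (simp add: card_image)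
  moreover have "stable_set ?U E (pick ` {..<b})"
    unfolding stable_set_def
  proof (intro conjI ballI)
    show "pick ` {..<b} \<subseteq> ?U" using pick by auto
  next
    fix x y assume "x \<in> pick ` {..<b}" "y \<in> pick ` {..<b}"
    then obtain r s where "r < b" "s < b" "x = pick r" "y = pick s" by auto
    then show "\<not> E x y" using pick lab unfolding clique_labelling_def by metis
  qed
  ultimately show False using card_stable_le_stability[OF _ _, of ?U E] fin stab by fastforce
qed

lemma extend_labelling:
  assumes und: "undirected E" and v: "v \<in> V" and r: "r < b"
    and lab: "clique_labelling (V - {v}) E b c"
    and nbhd_v: "nbhd V E v = {x \<in> V - {v}. c x = r}"
  shows "clique_labelling V E b (c(v := r))"
  unfolding clique_labelling_def
proof (intro conjI ballI)
  fix x assume "x \<in> V"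
  then show "(c(v := r)) x < b" using r lab by (auto simp: clique_labelling_def)
next
  fix x y assume x: "x \<in> V" and y: "y \<in> V"
  have E_v: "E v w \<longleftrightarrow> w \<noteq> v \<and> c w = r" if "w \<in> V" for w
    using nbhd_v that und unfolding nbhd_def undirected_def by blast
  show "E x y \<longleftrightarrow> x \<noteq> y \<and> (c(v := r)) x = (c(v := r)) y"
    using E_v[OF x] E_v[OF y] x y und lab
    unfolding undirected_def clique_labelling_def by (cases "x = v"; cases "y = v") auto
qed

lemma class_size_extend:
  assumes "finite V" "v \<in> V"
  shows "class_size V (c(v := r)) s = class_size (V - {v}) c s + (if s = r then 1 else 0)"
proof (cases "s = r")
  case True
  then have "{x \<in> V. (c(v := r)) x = s} = insert v {x \<in> V - {v}. c x = s}" using assms(2) by auto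
  then show ?thesis using True assms(1) by (simp add: class_size_def)
next
  case False
  then have "{x \<in> V. (c(v := r)) x = s} = {x \<in> V - {v}. c x = s}" by auto
  then show ?thesis using False by (simp add: class_size_def)
qed

text \<open>Induction on \<open>n\<close>: by
  \<open>tight_deletion\<close>, \<open>G - v\<close> is extremal and \<open>deg v = (n - 1) div b\<close>; by induction
  \<open>G - v\<close> is a balanced clique union; some clique \<open>K\<close> of it lies in \<open>N(v)\<close>, and since
  \<open>|K| \<ge> (n - 1) div b = |N(v)|\<close> we get \<open>K = N(v)\<close>, so \<open>v\<close> joins \<open>K\<close>.\<close>

theorem tight_structure:
  assumes "finite V" "undirected E" "stability_number V E \<le> b" "1 \<le> b"
    and "fibonacci_index V E = f_T (card V) b"
  shows "\<exists>c. clique_labelling V E b c \<and> balanced V b c"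
  using assms
proof (induction "card V" arbitrary: V rule: less_induct)
  case less
  note fin = less(2) and und = less(3) and stab = less(4) and b = less(5) and tight = less(6)
  show ?case
  proof (cases "V = {}")
    case True
    then show ?thesis by (auto simp: clique_labelling_def balanced_def class_size_def)
  next
    case False
    obtain v where v: "v \<in> V" and vmax: "\<forall>x\<in>V. degree V E x \<le> degree V E v"
      using exists_max_degree[OF fin False] by blast
    let ?W = "V - {v}"
    define k where "k = card ?W div b"
    have card_W: "card ?W = card V - 1" using fin v by simp
    have deg: "degree V E v = k"
      using tight_deletion(2)[OF fin und stab b v vmax tight] card_W by (simp add: k_def)
    obtain c where lab: "clique_labelling ?W E b c" and bal: "balanced ?W b c"
    proof -
      have "card ?W < card V" using fin v by (intro psubset_card_mono) auto
      moreover have "stability_number ?W E \<le> b"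
        using stability_number_mono[OF fin, of ?W E] stab by simp
      moreover have "fibonacci_index ?W E = f_T (card ?W) b"
        using tight_deletion(1)[OF fin und stab b v vmax tight] card_W by simp
      ultimately show ?thesis using less(1)[of ?W] fin und b that by auto
    qed
    obtain r where r: "r < b" and K_sub: "{x \<in> ?W. c x = r} \<subseteq> nbhd V E v"
      using class_inside_nbhd[OF fin _ lab] stability_delete_closed_nbhd[OF fin und v] stab
      by fastforce
    have fin_nbhd: "finite (nbhd V E v)" using fin by (simp add: nbhd_def)
    have "k \<le> class_size ?W c r" using bal r by (auto simp: balanced_def k_def)
    moreover have "class_size ?W c r \<le> degree V E v"
      unfolding class_size_def degree_def using card_mono[OF fin_nbhd K_sub] .
    ultimately have size_r: "class_size ?W c r = k" using deg by simp
    then have "card {x \<in> ?W. c x = r} = card (nbhd V E v)"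
      using deg by (simp add: class_size_def degree_def)
    then have nbhd_v: "nbhd V E v = {x \<in> ?W. c x = r}"
      using card_subset_eq[OF fin_nbhd K_sub] by simp
    let ?c = "c(v := r)"
    have lab': "clique_labelling V E b ?c"
      using extend_labelling[OF und v r lab nbhd_v] .
    have "\<forall>s<b. class_size V ?c s = k \<or> class_size V ?c s = k + 1"
      using bal size_r class_size_extend[OF fin v] by (auto simp: balanced_def k_def)
    moreover have "(\<Sum>s<b. class_size V ?c s) = card V"
      using sum_class_sizes[OF fin] lab' by (simp add: clique_labelling_def)
    ultimately have "balanced V b ?c"
      unfolding balanced_def by (rule near_equal_parts[OF b])
    then show ?thesis using lab' by blast
  qed
qed

lemma fibrewise_bij:
  assumes fin_A: "finite A" and fin_B: "finite B" and \<sigma>: "bij_betw \<sigma> I J"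
    and c: "\<forall>x\<in>A. c x \<in> I" and d: "\<forall>y\<in>B. d y \<in> J"
    and sizes: "\<forall>i\<in>I. card {x \<in> A. c x = i} = card {y \<in> B. d y = \<sigma> i}"
  shows "\<exists>f. bij_betw f A B \<and> (\<forall>x\<in>A. d (f x) = \<sigma> (c x))"
proof -
  have "\<forall>i\<in>I. \<exists>h. bij_betw h {x \<in> A. c x = i} {y \<in> B. d y = \<sigma> i}"
    using sizes fin_A fin_B by (auto intro: finite_same_card_bij)
  then obtain H where H: "\<And>i. i \<in> I \<Longrightarrow> bij_betw (H i) {x \<in> A. c x = i} {y \<in> B. d y = \<sigma> i}"
    by metis
  define f where "f x = H (c x) x" for x
  have f_fibre: "f x \<in> B \<and> d (f x) = \<sigma> (c x)" if "x \<in> A" for x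
    using bij_betwE[OF H[of "c x"]] c that by (auto simp: f_def)
  have "inj_on f A"
  proof (rule inj_onI)
    fix x y assume x: "x \<in> A" and y: "y \<in> A" and eq: "f x = f y"
    then have "c x = c y"
      using f_fibre \<sigma> c unfolding bij_betw_def inj_on_def by metis
    moreover have "inj_on (H (c x)) {z \<in> A. c z = c x}"
      using H c x unfolding bij_betw_def by blast
    ultimately show "x = y" using x y eq unfolding f_def inj_on_def by auto
  qed
  moreover have "B \<subseteq> f ` A"
  proof
    fix y assume y: "y \<in> B"
    then obtain i where i: "i \<in> I" "\<sigma> i = d y" using d \<sigma> unfolding bij_betw_def by force
    then have "y \<in> H i ` {x \<in> A. c x = i}" using H y unfolding bij_betw_def by auto
    then show "y \<in> f ` A" unfolding f_def by auto
  qed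
  ultimately show ?thesis using f_fibre unfolding bij_betw_def by blast
qed

lemma card_residue_class:
  assumes "r < b"
  shows "card {i \<in> {0..<n}. i mod b = r} = n div b + (if r < n mod b then 1 else 0)"
proof (induction n)
  case (Suc n)
  have "{i \<in> {0..<Suc n}. i mod b = r}
      = {i \<in> {0..<n}. i mod b = r} \<union> (if n mod b = r then {n} else {})"
    by (auto simp: less_Suc_eq)
  then have "card {i \<in> {0..<Suc n}. i mod b = r}
      = card {i \<in> {0..<n}. i mod b = r} + (if n mod b = r then 1 else 0)"
    by (simp add: card_Un_disjoint)
  also have "\<dots> = Suc n div b + (if r < Suc n mod b then 1 else 0)"
    using Suc.IH assms by (auto simp: mod_Suc div_Suc)
  finally show ?case .
qed simp

lemma turan_labelling:
  assumes "1 \<le> b"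
  shows "clique_labelling (turan_vertices n) (turan_edge n b) b (\<lambda>i. i mod b)"
    and "balanced (turan_vertices n) b (\<lambda>i. i mod b)"
proof -
  show "clique_labelling (turan_vertices n) (turan_edge n b) b (\<lambda>i. i mod b)"
    using assms by (auto simp: clique_labelling_def turan_vertices_def turan_edge_def)
  show "balanced (turan_vertices n) b (\<lambda>i. i mod b)"
    unfolding balanced_def class_size_def turan_vertices_def
    using card_residue_class[of _ b n] by simp
qed

lemma iso_pullback_labelling:
  assumes h: "bij_betw h V V'" and edges: "\<forall>x\<in>V. \<forall>y\<in>V. E x y \<longleftrightarrow> E' (h x) (h y)"
    and lab: "clique_labelling V' E' b c"
  shows "clique_labelling V E b (c \<circ> h)"
    and "class_size V (c \<circ> h) r = class_size V' c r"
proof -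
  show "clique_labelling V E b (c \<circ> h)"
    unfolding clique_labelling_def
  proof (intro conjI ballI)
    fix x assume "x \<in> V"
    then show "(c \<circ> h) x < b" using lab bij_betwE[OF h] by (auto simp: clique_labelling_def)
  next
    fix x y assume x: "x \<in> V" and y: "y \<in> V"
    have "h x \<in> V'" "h y \<in> V'" using x y bij_betwE[OF h] by auto
    moreover have "h x = h y \<longleftrightarrow> x = y"
      using x y bij_betw_imp_inj_on[OF h] by (auto dest: inj_onD)
    ultimately show "E x y \<longleftrightarrow> x \<noteq> y \<and> (c \<circ> h) x = (c \<circ> h) y"
      using edges x y lab by (auto simp: clique_labelling_def)
  qed
  have "h ` {x \<in> V. c (h x) = r} = {y \<in> V'. c y = r}"
    using h unfolding bij_betw_def by auto
  moreover have "inj_on h {x \<in> V. c (h x) = r}"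
    using bij_betw_imp_inj_on[OF h] by (rule inj_on_subset) auto
  ultimately have "card {x \<in> V. c (h x) = r} = card {y \<in> V'. c y = r}"
    using card_image by fastforce
  then show "class_size V (c \<circ> h) r = class_size V' c r" by (simp add: class_size_def)
qed

text \<open>Two balanced labellings of equally large vertex sets have the same class sizes up to a
  permutation of the labels: match large classes with large ones.\<close>

lemma balanced_class_matching:
  assumes fin: "finite V" "finite V'" and card: "card V = card V'" and b: "1 \<le> b"
    and c: "\<forall>x\<in>V. c x < b" and c': "\<forall>x\<in>V'. c' x < b"
    and bal: "balanced V b c" and bal': "balanced V' b c'"
  shows "\<exists>\<pi>. bij_betw \<pi> {..<b} {..<b} \<and> (\<forall>r<b. class_size V c r = class_size V' c' (\<pi> r))"
proof -
  define L where "L = {r \<in> {..<b}. class_size V c r = card V div b + 1}"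
  define L' where "L' = {r \<in> {..<b}. class_size V' c' r = card V' div b + 1}"
  have L: "L \<subseteq> {..<b}" "L' \<subseteq> {..<b}" by (auto simp: L_def L'_def)
  have "card L = card L'"
    using large_classes(2)[OF fin(1) b c bal] large_classes(2)[OF fin(2) b c' bal'] card
    by (simp add: L_def L'_def)
  moreover have "{r \<in> {..<b}. r \<in> M} = M" "{r \<in> {..<b}. r \<notin> M} = {..<b} - M"
    if "M \<subseteq> {..<b}" for M :: "nat set"
    using that by auto
  ultimately have "card {r \<in> {..<b}. (r \<in> L) = i} = card {r \<in> {..<b}. (r \<in> L') = id i}" for i
    using L by (cases i) (simp_all add: card_Diff_subset finite_subset)
  then obtain \<pi> where \<pi>: "bij_betw \<pi> {..<b} {..<b}"
    and \<pi>_L: "\<forall>r\<in>{..<b}. (\<pi> r \<in> L') = id (r \<in> L)"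
    using fibrewise_bij[of "{..<b}" "{..<b}" id UNIV UNIV "\<lambda>r. r \<in> L" "\<lambda>r. r \<in> L'"]
    by auto
  have "class_size V c r = class_size V' c' (\<pi> r)" if "r < b" for r
  proof -
    have "\<pi> r < b" using bij_betwE[OF \<pi>] that by auto
    then show ?thesis
      using large_classes(1)[OF fin(1) b c bal, folded L_def]
        large_classes(1)[OF fin(2) b c' bal', folded L'_def] \<pi>_L that card
      by simp
  qed
  then show ?thesis using \<pi> by blast
qed

lemma labelled_iso:
  assumes fin: "finite V" "finite V'"
    and lab: "clique_labelling V E b c" and lab': "clique_labelling V' E' b c'"
    and \<pi>: "bij_betw \<pi> {..<b} {..<b}"
    and sizes: "\<forall>r<b. class_size V c r = class_size V' c' (\<pi> r)"
  shows "graph_iso V E V' E'"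
proof -
  obtain f where f: "bij_betw f V V'" and f_class: "\<forall>x\<in>V. c' (f x) = \<pi> (c x)"
    using fibrewise_bij[OF fin \<pi>, of c c'] lab lab' sizes
    by (auto simp: clique_labelling_def class_size_def)
  have "E x y \<longleftrightarrow> E' (f x) (f y)" if x: "x \<in> V" and y: "y \<in> V" for x y
  proof -
    have "f x = f y \<longleftrightarrow> x = y" using x y bij_betw_imp_inj_on[OF f] by (auto dest: inj_onD)
    moreover have "\<pi> (c x) = \<pi> (c y) \<longleftrightarrow> c x = c y"
      using x y lab bij_betw_imp_inj_on[OF \<pi>] by (auto simp: clique_labelling_def dest: inj_onD)
    moreover have "f x \<in> V'" "f y \<in> V'" using x y bij_betwE[OF f] by auto
    ultimately show ?thesis
      using lab lab' x y f_class by (auto simp: clique_labelling_def)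
  qed
  then show ?thesis using f unfolding graph_iso_def by blast
qed

theorem iso_turan_iff_balanced:
  assumes fin: "finite V" and b: "1 \<le> b"
  shows "graph_iso V E (turan_vertices (card V)) (turan_edge (card V) b)
    \<longleftrightarrow> (\<exists>c. clique_labelling V E b c \<and> balanced V b c)"
proof
  assume "graph_iso V E (turan_vertices (card V)) (turan_edge (card V) b)"
  then obtain h where h: "bij_betw h V (turan_vertices (card V))"
    and edges: "\<forall>x\<in>V. \<forall>y\<in>V. E x y \<longleftrightarrow> turan_edge (card V) b (h x) (h y)"
    unfolding graph_iso_def by blast
  note pullback = iso_pullback_labelling[OF h edges turan_labelling(1)[OF b]]
  have "balanced V b ((\<lambda>i. i mod b) \<circ> h)"
    using turan_labelling(2)[OF b, of "card V"] pullback(2)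
    by (simp add: balanced_def turan_vertices_def)
  then show "\<exists>c. clique_labelling V E b c \<and> balanced V b c" using pullback(1) by blast
next
  assume "\<exists>c. clique_labelling V E b c \<and> balanced V b c"
  then obtain c where lab: "clique_labelling V E b c" and bal: "balanced V b c" by blast
  note turan = turan_labelling[OF b, of "card V"]
  obtain \<pi> where "bij_betw \<pi> {..<b} {..<b}"
    and "\<forall>r<b. class_size V c r = class_size (turan_vertices (card V)) (\<lambda>i. i mod b) (\<pi> r)"
    using balanced_class_matching[OF fin _ _ b _ _ bal turan(2)] lab b
    by (auto simp: turan_vertices_def clique_labelling_def)
  then show "graph_iso V E (turan_vertices (card V)) (turan_edge (card V) b)"
    using labelled_iso[OF fin _ lab turan(1)] by (simp add: turan_vertices_def)
qed

theorem mainTheorem5: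
  fixes V :: "'a set" and E :: "'a \<Rightarrow> 'a \<Rightarrow> bool" and n \<alpha> :: nat
  assumes "simple_graph V E"
    and "n = card V"
    and "\<alpha> = stability_number V E"
    and "1 \<le> \<alpha>" and "\<alpha> \<le> n"
  shows "fibonacci_index V E \<le> f_T n \<alpha>
    \<and> (fibonacci_index V E = f_T n \<alpha> \<longleftrightarrow> graph_iso V E (turan_vertices n) (turan_edge n \<alpha>))"
proof -
  have fin: "finite V" and und: "undirected E"
    using assms(1) unfolding simple_graph_def undirected_def by auto
  have stab: "stability_number V E \<le> \<alpha>" using assms(3) by simp
  have "fibonacci_index V E \<le> f_T n \<alpha>"
    using fib_upper_bound[OF fin und stab] assms(2) by simp
  moreover have "fibonacci_index V E = f_T n \<alpha>
      \<longleftrightarrow> (\<exists>c. clique_labelling V E \<alpha> c \<and> balanced V \<alpha> c)"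
    using tight_structure[OF fin und stab assms(4)] fib_balanced[OF fin und assms(4)] assms(2)
    by blast
  moreover have "(\<exists>c. clique_labelling V E \<alpha> c \<and> balanced V \<alpha> c)
      \<longleftrightarrow> graph_iso V E (turan_vertices n) (turan_edge n \<alpha>)"
    using iso_turan_iff_balanced[OF fin assms(4)] assms(2) by simp
  ultimately show ?thesis by simp
qed

end
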